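(* Let $(\mathscr{P},\mathscr{B},\mathrm{I})$ be an incidence structure with incidence graph $\Gamma$, and let $\varphi$ be a gain function on $\Gamma$ with gain group $G$ acting on the left on a nonempty set $\Lambda$. Let $k\ge 1$ be an integer and $u_0,\dots,u_k\in\mathscr{P}\cup\mathscr{B}$. For $\lambda_0,\dots,\lambda_k\in\Lambda$, set $m_i=y_{u_i,\lambda_i}$ if $u_i\in\mathscr{B}$ and $m_i=z_{u_i,\lambda_i}$ if $u_i\in\mathscr{P}$. Then $(u_0,\dots,u_k)$ is a $k$-chain in $(\mathscr{P},\mathscr{B},\mathrm{I})$ if and only if $(m_0,\dots,m_k)$ is a $k$-chain in $\mathfrak{M}(\Gamma,\varphi)$ for some $\lambda_0,\dots,\lambda_k\in\Lambda$. Furthermore, whenever $(m_0,\dots,m_k)$ is such a $k$-chain in $\mathfrak{M}(\Gamma,\varphi)$, we have $\lambda_k=\varphi_w\cdot\lambda_0$, where $w=(u_0,e_1,u_1,\dots,u_{k-1},e_k,u_k)$ is the corresponding walk in $\Gamma$ ($e_i$ the edge joining $u_{i-1}$ and $u_i$).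
   Context: An incidence structure is a triple $(\mathscr{P},\mathscr{B},\mathrm{I})$ where $\mathscr{P}$ (points) and $\mathscr{B}$ (lines) are nonempty disjoint sets and $\mathrm{I}\subseteq\mathscr{P}\times\mathscr{B}$ is a nonempty incidence relation; write $p\ \mathrm{I}\ b$ when $(p,b)\in\mathrm{I}$. The incidence graph $\Gamma$ is the bipartite graph with vertex set $\mathscr{P}\cup\mathscr{B}$ and an edge $bp$ for each incident pair; every edge is oriented from its line to its point. A gain function with gain group $G$ assigns to each edge $e$ an element $\varphi(e)\in G$ (so $\varphi(e^{-1})=\varphi(e)^{-1}$). For a walk $w=(u_0,e_1,u_1,\dots,e_n,u_n)$, $\varphi_w=\varphi(e_n)^{\delta_n}\cdots\varphi(e_1)^{\delta_1}$ with $\delta_i=1$ if $e_i$ is oriented from $u_{i-1}$ to $u_i$ and $\delta_i=-1$ otherwise. Construction $\mathfrak{M}(\Gamma,\varphi)$: the incidence structure whose points are the formal symbols $x_p$ ($p\in\mathscr{P}$) and $y_{b,\lambda}$ ($b\in\mathscr{B},\lambda\in\Lambda$), whose lines are the formal symbols $z_{p,\lambda}$ ($p\in\mathscr{P},\lambda\in\Lambda$), and whose incidences are exactly: $x_p$ incident with $z_{p,\lambda}$ for all $\lambda$, and $y_{b,\lambda}$ incident with $z_{p,\mu}$ whenever $b\ \mathrm{I}\ p$ and $\mu=\varphi(bp)\cdot\lambda$. A $k$-chain in an incidence structure is a sequence $(u_0,\dots,u_k)$ of elements (points or lines) with $u_i$ incident with $u_{i-1}$ for all $1\le i\le k$. 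*)

theory Defs
  imports "HOL-Algebra.Group_Action"
begin

definition incidence_structure :: "'a set \<Rightarrow> 'a set \<Rightarrow> ('a \<times> 'a) set \<Rightarrow> bool" where
  "incidence_structure P B I \<longleftrightarrow>
     P \<noteq> {} \<and> B \<noteq> {} \<and> P \<inter> B = {} \<and> I \<subseteq> P \<times> B \<and> I \<noteq> {}"

definition is_chain :: "'a set \<Rightarrow> 'a set \<Rightarrow> ('a \<times> 'a) set \<Rightarrow> nat \<Rightarrow> (nat \<Rightarrow> 'a) \<Rightarrow> bool" where
  "is_chain P B I k u \<longleftrightarrow>
     (\<forall>i\<le>k. u i \<in> P \<union> B) \<and>
     (\<forall>i. 1 \<le> i \<and> i \<le> k \<longrightarrow> (u i, u (i - 1)) \<in> I \<or> (u (i - 1), u i) \<in> I)"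

datatype ('a, 'l) msym = Xs 'a | Ys 'a 'l | Zs 'a 'l

definition M_points :: "'a set \<Rightarrow> 'a set \<Rightarrow> 'l set \<Rightarrow> ('a, 'l) msym set" where
  "M_points P B \<Lambda> = {Xs p | p. p \<in> P} \<union> {Ys b l | b l. b \<in> B \<and> l \<in> \<Lambda>}"

definition M_lines :: "'a set \<Rightarrow> 'l set \<Rightarrow> ('a, 'l) msym set" where
  "M_lines P \<Lambda> = {Zs p l | p l. p \<in> P \<and> l \<in> \<Lambda>}"

text \<open>Incidences of M(Gamma, phi); gain b p is the gain of the edge bp (oriented b to p),
  act is the left action of the gain group on Lambda.\<close>
definition M_inc :: "'a set \<Rightarrow> ('a \<times> 'a) set \<Rightarrow> 'l set \<Rightarrow> ('g \<Rightarrow> 'l \<Rightarrow> 'l)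
    \<Rightarrow> ('a \<Rightarrow> 'a \<Rightarrow> 'g) \<Rightarrow> (('a, 'l) msym \<times> ('a, 'l) msym) set" where
  "M_inc P I \<Lambda> act gain =
     {(Xs p, Zs p l) | p l. p \<in> P \<and> l \<in> \<Lambda>} \<union>
     {(Ys b l, Zs p m) | b p l m. (p, b) \<in> I \<and> l \<in> \<Lambda> \<and> m = act (gain b p) l}"

definition mlab :: "'a set \<Rightarrow> (nat \<Rightarrow> 'a) \<Rightarrow> (nat \<Rightarrow> 'l) \<Rightarrow> nat \<Rightarrow> ('a, 'l) msym" where
  "mlab B u lam i = (if u i \<in> B then Ys (u i) (lam i) else Zs (u i) (lam i))"

definition step_gain :: "('g, 'c) monoid_scheme \<Rightarrow> 'a set \<Rightarrow> ('a \<Rightarrow> 'a \<Rightarrow> 'g) \<Rightarrow> 'a \<Rightarrow> 'a \<Rightarrow> 'g" where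
  "step_gain G B gain u v = (if u \<in> B then gain u v else inv\<^bsub>G\<^esub> (gain v u))"

fun walk_gain :: "('g, 'c) monoid_scheme \<Rightarrow> 'a set \<Rightarrow> ('a \<Rightarrow> 'a \<Rightarrow> 'g) \<Rightarrow> (nat \<Rightarrow> 'a) \<Rightarrow> nat \<Rightarrow> 'g" where
  "walk_gain G B gain u 0 = \<one>\<^bsub>G\<^esub>"
| "walk_gain G B gain u (Suc n) = step_gain G B gain (u n) (u (Suc n)) \<otimes>\<^bsub>G\<^esub> walk_gain G B gain u n"

end

theory Submission
  imports Defs
begin

text \<open>Each step of a chain in \<open>M(\<Gamma>, \<phi>)\<close> joins two lifted elements whose labels differ by
  the gain of the corresponding edge of \<open>\<Gamma>\<close>; conversely, since the gain group acts by
  bijections, any edge of \<open>\<Gamma>\<close> lifts to an incidence starting from an arbitrary label.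
  Hence chains lift uniquely once \<open>\<lambda>\<^sub>0\<close> is chosen, namely with \<open>\<lambda>\<^sub>i = \<phi>\<^sub>w\<^sub>i \<cdot> \<lambda>\<^sub>0\<close> for the
  initial segments \<open>w\<^sub>i\<close> of the walk, and projecting a chain of \<open>M(\<Gamma>, \<phi>)\<close> gives a chain.\<close>

definition joined :: "('a \<times> 'a) set \<Rightarrow> 'a \<Rightarrow> 'a \<Rightarrow> bool" where
  "joined R x y \<longleftrightarrow> (y, x) \<in> R \<or> (x, y) \<in> R"

lemma is_chain_iff_joined_Suc:
  "is_chain P B R k u \<longleftrightarrow>
     (\<forall>i\<le>k. u i \<in> P \<union> B) \<and> (\<forall>i<k. joined R (u i) (u (Suc i)))"
proof -
  have "(\<forall>i. 1 \<le> i \<and> i \<le> k \<longrightarrow> joined R (u (i - 1)) (u i)) \<longleftrightarrow>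
        (\<forall>i<k. joined R (u i) (u (Suc i)))"
  proof safe
    fix i assume "\<forall>i. 1 \<le> i \<and> i \<le> k \<longrightarrow> joined R (u (i - 1)) (u i)" "i < k"
    then show "joined R (u i) (u (Suc i))"
      by (metis Suc_leI diff_Suc_1 le_add1 plus_1_eq_Suc)
  next
    fix i assume "\<forall>i<k. joined R (u i) (u (Suc i))" "1 \<le> i" "i \<le> k"
    then show "joined R (u (i - 1)) (u i)"
      by (cases i) auto
  qed
  then show ?thesis
    unfolding is_chain_def joined_def by simp
qed

definition lift :: "'a set \<Rightarrow> 'a \<Rightarrow> 'l \<Rightarrow> ('a, 'l) msym" where
  "lift B v l = (if v \<in> B then Ys v l else Zs v l)"

lemma mlab_eq_lift: "mlab B u lam i = lift B (u i) (lam i)"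
  unfolding mlab_def lift_def ..

lemma lift_in_M:
  "v \<in> P \<union> B \<Longrightarrow> l \<in> \<Lambda> \<Longrightarrow> lift B v l \<in> M_points P B \<Lambda> \<union> M_lines P \<Lambda>"
  unfolding lift_def M_points_def M_lines_def by auto

lemma (in group_action) act_eq_inv_iff:
  assumes "g \<in> carrier G" "x \<in> E" "y \<in> E"
  shows "x = \<phi> g y \<longleftrightarrow> y = \<phi> (inv g) x"
proof -
  interpret group G
    using group_hom group_hom.axioms(1) by blast
  show ?thesis
    using orbit_sym_aux[OF assms(1,3)] orbit_sym_aux[OF inv_closed[OF assms(1)] assms(2)]
    by (auto simp: inv_inv[OF assms(1)])
qed

locale gain_incidence_structure = group_action G \<Lambda> act
  for G :: "('g, 'c) monoid_scheme" (structure) and \<Lambda> :: "'l set" and act +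
  fixes P B :: "'a set" and I :: "('a \<times> 'a) set" and gain :: "'a \<Rightarrow> 'a \<Rightarrow> 'g"
  assumes incidence: "incidence_structure P B I"
    and gain_closed: "(p, b) \<in> I \<Longrightarrow> gain b p \<in> carrier G"
begin

sublocale group G
  using group_hom group_hom.axioms(1) by blast

lemma incident_line_point:
  assumes "(p, b) \<in> I" shows "b \<in> B" and "p \<notin> B"
  using assms incidence unfolding incidence_structure_def by auto

lemma step_gain_closed:
  "joined I x y \<Longrightarrow> step_gain G B gain x y \<in> carrier G"
  unfolding joined_def step_gain_def
  using incident_line_point gain_closed by auto

lemma joined_lift_iff:
  assumes "lx \<in> \<Lambda>" "ly \<in> \<Lambda>"
  shows "joined (M_inc P I \<Lambda> act gain) (lift B x lx) (lift B y ly) \<longleftrightarrow>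
         joined I x y \<and> ly = act (step_gain G B gain x y) lx"
proof -
  have to_x: "(lift B y ly, lift B x lx) \<in> M_inc P I \<Lambda> act gain \<longleftrightarrow>
      (x, y) \<in> I \<and> lx = act (gain y x) ly"
    using assms incident_line_point unfolding M_inc_def lift_def by auto
  have to_y: "(lift B x lx, lift B y ly) \<in> M_inc P I \<Lambda> act gain \<longleftrightarrow>
      (y, x) \<in> I \<and> ly = act (gain x y) lx"
    using assms incident_line_point unfolding M_inc_def lift_def by auto
  consider (from_line) "(y, x) \<in> I" | (from_point) "(x, y) \<in> I" | "\<not> joined I x y"
    unfolding joined_def by blast
  then show ?thesis
  proof cases
    case from_line
    then have "x \<in> B" "(x, y) \<notin> I"
      using incident_line_point by blast+
    with from_line show ?thesis
      unfolding joined_def step_gain_def to_x to_y by simp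
  next
    case from_point
    then have "x \<notin> B" "(y, x) \<notin> I"
      and "lx = act (gain y x) ly \<longleftrightarrow> ly = act (inv (gain y x)) lx"
      using incident_line_point gain_closed act_eq_inv_iff assms by blast+
    with from_point show ?thesis
      unfolding joined_def step_gain_def to_x to_y by simp
  qed (simp add: joined_def to_x to_y)
qed

lemma walk_gain_closed:
  "\<forall>i<n. joined I (u i) (u (Suc i)) \<Longrightarrow> walk_gain G B gain u n \<in> carrier G"
proof (induction n)
  case (Suc n)
  then have "step_gain G B gain (u n) (u (Suc n)) \<in> carrier G"
    by (intro step_gain_closed) simp
  with Suc show ?case
    by simp
qed simp

lemma walk_gain_act_Suc:
  assumes "\<forall>i\<le>n. joined I (u i) (u (Suc i))" "l \<in> \<Lambda>"
  shows "act (walk_gain G B gain u (Suc n)) l =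
         act (step_gain G B gain (u n) (u (Suc n))) (act (walk_gain G B gain u n) l)"
proof -
  have "step_gain G B gain (u n) (u (Suc n)) \<in> carrier G"
    using assms(1) step_gain_closed by simp
  moreover have "walk_gain G B gain u n \<in> carrier G"
    using assms(1) by (intro walk_gain_closed) simp
  ultimately show ?thesis
    using composition_rule[OF assms(2)] by simp
qed

lemma lifted_chain_iff:
  assumes "\<forall>i\<le>k. u i \<in> P \<union> B" "\<forall>i\<le>k. lam i \<in> \<Lambda>"
  shows "is_chain (M_points P B \<Lambda>) (M_lines P \<Lambda>) (M_inc P I \<Lambda> act gain) k (mlab B u lam) \<longleftrightarrow>
         (\<forall>i<k. joined I (u i) (u (Suc i)) \<and>
                lam (Suc i) = act (step_gain G B gain (u i) (u (Suc i))) (lam i))"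
proof -
  have members: "\<forall>i\<le>k. mlab B u lam i \<in> M_points P B \<Lambda> \<union> M_lines P \<Lambda>"
  proof (intro allI impI)
    fix i assume "i \<le> k"
    with assms show "mlab B u lam i \<in> M_points P B \<Lambda> \<union> M_lines P \<Lambda>"
      unfolding mlab_eq_lift by (intro lift_in_M) simp_all
  qed
  have steps: "joined (M_inc P I \<Lambda> act gain) (mlab B u lam i) (mlab B u lam (Suc i)) \<longleftrightarrow>
      joined I (u i) (u (Suc i)) \<and> lam (Suc i) = act (step_gain G B gain (u i) (u (Suc i))) (lam i)"
    if "i < k" for i
    unfolding mlab_eq_lift using that assms(2) by (intro joined_lift_iff) auto
  show ?thesis
    unfolding is_chain_iff_joined_Suc using members steps by simp
qed

lemma labels_along_walk:
  assumes "\<forall>i<k. joined I (u i) (u (Suc i)) \<and>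
                lam (Suc i) = act (step_gain G B gain (u i) (u (Suc i))) (lam i)"
    and "lam 0 \<in> \<Lambda>" and "n \<le> k"
  shows "lam n = act (walk_gain G B gain u n) (lam 0)"
  using \<open>n \<le> k\<close>
proof (induction n)
  case 0
  show ?case
    using \<open>lam 0 \<in> \<Lambda>\<close> id_eq_one[symmetric] by simp
next
  case (Suc n)
  then have steps: "\<forall>i\<le>n. joined I (u i) (u (Suc i))"
    using assms(1) by simp
  have "lam (Suc n) = act (step_gain G B gain (u n) (u (Suc n))) (lam n)"
    using assms(1) Suc.prems by simp
  also have "\<dots> = act (step_gain G B gain (u n) (u (Suc n))) (act (walk_gain G B gain u n) (lam 0))"
    using Suc by simp
  also have "\<dots> = act (walk_gain G B gain u (Suc n)) (lam 0)"
    using walk_gain_act_Suc[OF steps \<open>lam 0 \<in> \<Lambda>\<close>] by simp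
  finally show ?case .
qed

lemma walk_labels_lift_chain:
  assumes "is_chain P B I k u" "l \<in> \<Lambda>"
  defines "lam \<equiv> \<lambda>i. act (walk_gain G B gain u i) l"
  shows "(\<forall>i\<le>k. lam i \<in> \<Lambda>) \<and>
         is_chain (M_points P B \<Lambda>) (M_lines P \<Lambda>) (M_inc P I \<Lambda> act gain) k (mlab B u lam)"
proof -
  have joined: "\<forall>i<k. joined I (u i) (u (Suc i))" and members: "\<forall>i\<le>k. u i \<in> P \<union> B"
    using assms(1) unfolding is_chain_iff_joined_Suc by auto
  have labels: "\<forall>i\<le>k. lam i \<in> \<Lambda>"
  proof (intro allI impI)
    fix i assume "i \<le> k"
    then have "walk_gain G B gain u i \<in> carrier G"
      using joined by (intro walk_gain_closed) auto
    then show "lam i \<in> \<Lambda>"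
      unfolding lam_def using \<open>l \<in> \<Lambda>\<close> element_image by blast
  qed
  have "\<forall>i<k. joined I (u i) (u (Suc i)) \<and>
      lam (Suc i) = act (step_gain G B gain (u i) (u (Suc i))) (lam i)"
  proof (intro allI impI conjI)
    fix i assume "i < k"
    with joined show "joined I (u i) (u (Suc i))"
      by simp
    from \<open>i < k\<close> joined have "\<forall>j\<le>i. joined I (u j) (u (Suc j))"
      by auto
    then show "lam (Suc i) = act (step_gain G B gain (u i) (u (Suc i))) (lam i)"
      unfolding lam_def using \<open>l \<in> \<Lambda>\<close> by (rule walk_gain_act_Suc)
  qed
  with labels show ?thesis
    using lifted_chain_iff[OF members labels] by blast
qed

lemma lifted_chain_projects:
  assumes "\<forall>i\<le>k. u i \<in> P \<union> B" "\<forall>i\<le>k. lam i \<in> \<Lambda>"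
    and "is_chain (M_points P B \<Lambda>) (M_lines P \<Lambda>) (M_inc P I \<Lambda> act gain) k (mlab B u lam)"
  shows "is_chain P B I k u \<and> lam k = act (walk_gain G B gain u k) (lam 0)"
proof -
  have steps: "\<forall>i<k. joined I (u i) (u (Suc i)) \<and>
      lam (Suc i) = act (step_gain G B gain (u i) (u (Suc i))) (lam i)"
    using assms lifted_chain_iff by blast
  then have "is_chain P B I k u"
    using assms(1) unfolding is_chain_iff_joined_Suc by blast
  moreover have "lam k = act (walk_gain G B gain u k) (lam 0)"
    using assms(2) by (intro labels_along_walk[OF steps]) simp_all
  ultimately show ?thesis ..
qed

end

theorem proposition2:
  fixes P B :: "'a set" and I :: "('a \<times> 'a) set"
    and G :: "('g, 'c) monoid_scheme" and \<Lambda> :: "'l set" and act :: "'g \<Rightarrow> 'l \<Rightarrow> 'l"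
    and gain :: "'a \<Rightarrow> 'a \<Rightarrow> 'g" and k :: nat and u :: "nat \<Rightarrow> 'a"
  assumes "incidence_structure P B I"
    and "group G"
    and "group_action G \<Lambda> act"
    and "\<Lambda> \<noteq> {}"
    and "\<forall>(p, b) \<in> I. gain b p \<in> carrier G"
    and "k \<ge> 1"
    and "\<forall>i\<le>k. u i \<in> P \<union> B"
  shows "(is_chain P B I k u \<longleftrightarrow>
           (\<exists>lam. (\<forall>i\<le>k. lam i \<in> \<Lambda>) \<and>
              is_chain (M_points P B \<Lambda>) (M_lines P \<Lambda>) (M_inc P I \<Lambda> act gain) k (mlab B u lam))) \<and>
         (\<forall>lam. (\<forall>i\<le>k. lam i \<in> \<Lambda>) \<and>
              is_chain (M_points P B \<Lambda>) (M_lines P \<Lambda>) (M_inc P I \<Lambda> act gain) k (mlab B u lam)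
            \<longrightarrow> lam k = act (walk_gain G B gain u k) (lam 0))"
proof -
  interpret gain_incidence_structure G \<Lambda> act P B I gain
    using assms(5) by (intro gain_incidence_structure.intro gain_incidence_structure_axioms.intro
        assms(1,3)) auto
  obtain l where "l \<in> \<Lambda>"
    using assms(4) by blast
  have "\<exists>lam. (\<forall>i\<le>k. lam i \<in> \<Lambda>) \<and>
      is_chain (M_points P B \<Lambda>) (M_lines P \<Lambda>) (M_inc P I \<Lambda> act gain) k (mlab B u lam)"
    if "is_chain P B I k u"
    using walk_labels_lift_chain[OF that \<open>l \<in> \<Lambda>\<close>]
    by (rule exI[of _ "\<lambda>i. act (walk_gain G B gain u i) l"])
  moreover note lifted_chain_projects[OF assms(7)]
  ultimately show ?thesis
    by blast
qed

end
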